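(* Let $r>1$ and integers $N,K\ge1$. Let $\gamma(r,K,N)$ be the supremum of $$\frac{p^K}{z^K}\sum_{i=1}^{K-1}\frac{z^i}{\sum_{j=i}^Kp^j}$$ over all $p=(p^1,\dots,p^K)$ with $rp^K\ge1$, $\sum_{i=1}^Kp^i=1$, $p^i>0$ for all $i$, where $z^i=(\sum_{j=1}^ip^j)^N-(\sum_{j=1}^{i-1}p^j)^N$. Then $\eta(r,K,N)=\gamma(r,K,N)/(1+\gamma(r,K,N))$.
   Context: Single item auction with $N$ buyers whose values are i.i.d., each taking values $0<x^1<\dots<x^K$ with probabilities $p^i>0$, $\sum_ip^i=1$. With $z^i$ as in the claim and reserve index $t(x,p)=\max\{i: i\in\arg\max_{1\le k\le K}x^k\sum_{j=k}^Kp^j\}$, the efficiency loss ratio of the welfare-maximizing revenue-optimal auction is $\mathrm{ELR}_N(x,p)=\sum_{i=1}^{t(x,p)-1}z^ix^i/\sum_{i=1}^Kz^ix^i$. $\eta(r,K,N)$ is the supremum of $\mathrm{ELR}_N(x,p)$ over all such $p$ and all $x$ with $0<x^1<\dots<x^K\le rx^1$. *)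

theory Defs
  imports Complex_Main
begin

text \<open>Value distributions are indexed 1..K: probabilities p i and values x i
  for i in {1..K} (values outside this range are irrelevant).\<close>

definition zz :: "nat \<Rightarrow> (nat \<Rightarrow> real) \<Rightarrow> nat \<Rightarrow> real" where
  "zz N p i = (\<Sum>j\<in>{1..i}. p j) ^ N - (\<Sum>j\<in>{1..<i}. p j) ^ N"

definition valid_prob :: "nat \<Rightarrow> (nat \<Rightarrow> real) \<Rightarrow> bool" where
  "valid_prob K p \<longleftrightarrow> (\<forall>i\<in>{1..K}. p i > 0) \<and> (\<Sum>i\<in>{1..K}. p i) = 1"

definition valid_values :: "real \<Rightarrow> nat \<Rightarrow> (nat \<Rightarrow> real) \<Rightarrow> bool" where
  "valid_values r K x \<longleftrightarrow> 0 < x 1 \<and> (\<forall>i\<in>{1..K}. \<forall>j\<in>{1..K}. i < j \<longrightarrow> x i < x j)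
     \<and> x K \<le> r * x 1"

definition revenue :: "nat \<Rightarrow> (nat \<Rightarrow> real) \<Rightarrow> (nat \<Rightarrow> real) \<Rightarrow> nat \<Rightarrow> real" where
  "revenue K x p k = x k * (\<Sum>j\<in>{k..K}. p j)"

definition reserve_idx :: "nat \<Rightarrow> (nat \<Rightarrow> real) \<Rightarrow> (nat \<Rightarrow> real) \<Rightarrow> nat" where
  "reserve_idx K x p = Max {i\<in>{1..K}. \<forall>k\<in>{1..K}. revenue K x p k \<le> revenue K x p i}"

definition ELR :: "nat \<Rightarrow> nat \<Rightarrow> (nat \<Rightarrow> real) \<Rightarrow> (nat \<Rightarrow> real) \<Rightarrow> real" where
  "ELR N K x p = (\<Sum>i\<in>{1..<reserve_idx K x p}. zz N p i * x i) / (\<Sum>i\<in>{1..K}. zz N p i * x i)"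

definition eta :: "real \<Rightarrow> nat \<Rightarrow> nat \<Rightarrow> real" where
  "eta r K N = Sup {ELR N K x p | x p. valid_prob K p \<and> valid_values r K x}"

definition gamma :: "real \<Rightarrow> nat \<Rightarrow> nat \<Rightarrow> real" where
  "gamma r K N = Sup {p K / zz N p K * (\<Sum>i\<in>{1..K-1}. zz N p i / (\<Sum>j\<in>{i..K}. p j))
      | p. r * p K \<ge> 1 \<and> valid_prob K p}"

end

theory Submission
  imports Defs
begin

text \<open>
  Write S_i = p_i + ... + p_K and F_i = p_1 + ... + p_i. For values x with reserve t = t(x,p),
  optimality of the reserve gives x_i \<le> x_t S_t / S_i for i < t, while x_i \<ge> x_t for i \<ge> t
  and z_t + ... + z_K = 1 - F_(t-1)^N. Hence ELR \<le> g / (1 + g) with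
  g = S_t / (1 - F_(t-1)^N) * \<Sum>_(i<t) z_i / S_i.
  Splitting the atom p_1 into K + 1 - t equal atoms turns p into a distribution q on K atoms
  with q_K = S_t whose \<gamma>-objective is at least g (the split atoms contribute at least
  p_1^N = z_1 / S_1, the others reproduce the remaining terms), and r q_K \<ge> 1 because the
  reserve earns at least x_1 \<ge> x_K / r.
  Conversely, for an admissible q the equal-revenue values x_i = q_K / S_i make every reserve
  optimal, so the tie-break selects t = K and ELR equals \<gamma>(q) / (1 + \<gamma>(q)) exactly.
  Since g \<mapsto> g / (1 + g) is increasing and continuous, the two suprema correspond.
\<close>

lemma sum_telescope_pred:
  fixes f :: "nat \<Rightarrow> 'a::ab_group_add"
  assumes "a \<le> Suc b"
  shows "(\<Sum>i=a..b. f i - f (i - 1)) = f b - f (a - 1)"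
  using assms
proof (induction b)
  case 0
  then show ?case by (cases a) auto
next
  case (Suc b)
  then show ?case by (cases "a = Suc (Suc b)") auto
qed

lemma sum_split_at:
  fixes g :: "nat \<Rightarrow> 'a::comm_monoid_add"
  assumes "m \<le> Suc n" "n \<le> k"
  shows "sum g {m..k} = sum g {m..n} + sum g {Suc n..k}"
  using sum.ub_add_nat[of m n g "k - n"] assms by simp

lemma atLeastLessThan_1_eq: "{1..<n} = {1..n - 1::nat}"
  by auto

lemma prefix_sum_pred:
  fixes p :: "nat \<Rightarrow> 'a::comm_monoid_add"
  assumes "1 \<le> i"
  shows "sum p {1..i} = sum p {1..i - 1} + p i"
  using assms by (cases i) (auto simp: add.commute)

context
  fixes K :: nat and p :: "nat \<Rightarrow> real"
  assumes p: "valid_prob K p"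
begin

lemma valid_prob_prefix_sum_nonneg: "i \<le> K \<Longrightarrow> 0 \<le> sum p {1..i}"
  using p unfolding valid_prob_def by (intro sum_nonneg) (auto intro: less_imp_le)

lemma valid_prob_tail_sum:
  assumes "1 \<le> i" "i \<le> Suc K"
  shows "sum p {i..K} = 1 - sum p {1..i - 1}"
  using sum_split_at[of 1 "i - 1" K p] p assms unfolding valid_prob_def by simp

lemma valid_prob_tail_sum_pos: "1 \<le> i \<Longrightarrow> i \<le> K \<Longrightarrow> 0 < sum p {i..K}"
  using p unfolding valid_prob_def by (intro sum_pos) auto

lemma valid_prob_prefix_sum_less_1: "i < K \<Longrightarrow> sum p {1..i} < 1"
  using valid_prob_tail_sum[of "Suc i"] valid_prob_tail_sum_pos[of "Suc i"] by simp

lemma valid_prob_prefix_sum_pow_less_1: "i < K \<Longrightarrow> 1 \<le> N \<Longrightarrow> sum p {1..i} ^ N < 1"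
  using valid_prob_prefix_sum_less_1[of i] valid_prob_prefix_sum_nonneg[of i]
  by (simp add: power_less_one_iff)

lemma valid_prob_tail_sum_strict_antimono:
  assumes "1 \<le> i" "i < j" "j \<le> K"
  shows "sum p {j..K} < sum p {i..K}"
proof -
  have "sum p {i..K} = sum p {i..j - 1} + sum p {j..K}"
    using sum_split_at[of i "j - 1" K p] assms by simp
  moreover have "0 < sum p {i..j - 1}"
    using p assms unfolding valid_prob_def by (intro sum_pos) auto
  ultimately show ?thesis by simp
qed

end

lemma zz_eq: "zz N p i = sum p {1..i} ^ N - sum p {1..i - 1} ^ N"
  unfolding zz_def atLeastLessThan_1_eq ..

lemma sum_zz: "a \<le> Suc b \<Longrightarrow> (\<Sum>i=a..b. zz N p i) = sum p {1..b} ^ N - sum p {1..a - 1} ^ N"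
  unfolding zz_eq by (rule sum_telescope_pred)

lemma zz_nonneg:
  assumes "valid_prob K p" "1 \<le> i" "i \<le> K"
  shows "0 \<le> zz N p i"
proof -
  have "0 \<le> sum p {1..i - 1}" "0 \<le> p i"
    using assms valid_prob_prefix_sum_nonneg[OF assms(1), of "i - 1"]
    by (auto simp: valid_prob_def intro: less_imp_le)
  then show ?thesis
    unfolding zz_eq prefix_sum_pred[OF assms(2)] by (simp add: power_mono)
qed

lemma zz_last:
  assumes "valid_prob K p"
  shows "zz N p K = 1 - sum p {1..K - 1} ^ N"
  using assms unfolding zz_eq valid_prob_def by simp

lemma zz_last_pos:
  assumes "valid_prob K p" "1 \<le> K" "1 \<le> N"
  shows "0 < zz N p K"
proof -
  have "sum p {1..K - 1} ^ N < 1"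
    using valid_prob_prefix_sum_pow_less_1[OF assms(1), of "K - 1"] assms(2,3) by simp
  then show ?thesis unfolding zz_last[OF assms(1)] by simp
qed

lemma sum_zz_div_tail_nonneg:
  assumes "valid_prob K q" "n \<le> K"
  shows "0 \<le> (\<Sum>i\<in>{1..n}. zz N q i / sum q {i..K})"
  using assms zz_nonneg[OF assms(1)] valid_prob_tail_sum_pos[OF assms(1)]
  by (intro sum_nonneg divide_nonneg_pos) auto

lemma prefix_sum_pow_le_sum_zz_div_tail:
  assumes "valid_prob K q" "n \<le> K" "1 \<le> N"
  shows "sum q {1..n} ^ N \<le> (\<Sum>i\<in>{1..n}. zz N q i / sum q {i..K})"
proof -
  have "sum q {1..n} ^ N = (\<Sum>i\<in>{1..n}. zz N q i)"
    using sum_zz[of 1 n N q] assms(3) by (simp add: power_0_left)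
  also have "\<dots> \<le> (\<Sum>i\<in>{1..n}. zz N q i / sum q {i..K})"
  proof (rule sum_mono)
    fix i assume i: "i \<in> {1..n}"
    have "sum q {i..K} \<le> 1"
      using valid_prob_tail_sum[OF assms(1), of i] valid_prob_prefix_sum_nonneg[OF assms(1), of "i - 1"]
        i assms(2) by auto
    then show "zz N q i \<le> zz N q i / sum q {i..K}"
      using i assms zz_nonneg[OF assms(1), of i N] valid_prob_tail_sum_pos[OF assms(1), of i]
      by (simp add: le_divide_eq mult_left_le)
  qed
  finally show ?thesis .
qed

lemma frac_one_plus_mono:
  fixes a b :: real
  assumes "0 \<le> a" "a \<le> b"
  shows "a / (1 + a) \<le> b / (1 + b)"
  using assms by (simp add: divide_simps algebra_simps)

lemma div_add_le_frac_one_plus: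
  fixes A B c g :: real
  assumes "0 \<le> A" "0 < c" "A \<le> c * g" "c \<le> B" "0 \<le> g"
  shows "A / (A + B) \<le> g / (1 + g)"
proof -
  have "A \<le> g * B" using assms by (smt (verit) mult.commute mult_left_mono)
  then show ?thesis using assms by (simp add: divide_simps algebra_simps)
qed

lemma cSup_frac_one_plus:
  fixes G E :: "real set"
  assumes G: "G \<noteq> {}" "bdd_above G" "\<And>g. g \<in> G \<Longrightarrow> 0 \<le> g"
    and into: "\<And>g. g \<in> G \<Longrightarrow> g / (1 + g) \<in> E"
    and dominated: "\<And>e. e \<in> E \<Longrightarrow> \<exists>g\<in>G. e \<le> g / (1 + g)"
  shows "Sup E = Sup G / (1 + Sup G)"
proof -
  let ?fG = "(\<lambda>g. g / (1 + g)) ` G"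
  \<comment> \<open>Clipping at 0 makes the map monotone and continuous on all of the reals.\<close>
  define f :: "real \<Rightarrow> real" where "f g = max 0 g / (1 + max 0 g)" for g
  have "mono f"
    by (rule monoI) (simp add: f_def frac_one_plus_mono)
  moreover have "continuous (at_left (Sup G)) f"
    unfolding f_def by (intro continuous_intros) auto
  ultimately have "f (Sup G) = Sup (f ` G)"
    using G by (intro continuous_at_Sup_mono)
  moreover have "f ` G = ?fG"
    using G(3) by (intro image_cong) (auto simp: f_def)
  moreover have "0 \<le> Sup G"
    using G by (meson all_not_in_conv cSup_upper order_trans)
  ultimately have Sup_fG: "Sup ?fG = Sup G / (1 + Sup G)"
    by (simp add: f_def)
  have "bdd_above ?fG"
    by (intro bdd_aboveI[where M = 1]) (auto dest: G(3))
  then have le: "e \<le> Sup ?fG" if "e \<in> E" for e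
    using dominated[OF that] by (meson cSup_upper image_eqI order_trans)
  have "E \<noteq> {}" using G into by blast
  then have "Sup E \<le> Sup ?fG"
    using le by (rule cSup_least)
  moreover have "Sup ?fG \<le> Sup E"
    using G into le by (intro cSup_subset_mono) (auto intro!: bdd_aboveI)
  ultimately show ?thesis using Sup_fG by simp
qed

definition gamma_obj :: "nat \<Rightarrow> nat \<Rightarrow> (nat \<Rightarrow> real) \<Rightarrow> real" where
  "gamma_obj N K q = q K / zz N q K * (\<Sum>i\<in>{1..K-1}. zz N q i / (\<Sum>j\<in>{i..K}. q j))"

lemma gamma_eq_Sup_gamma_obj:
  "gamma r K N = Sup {gamma_obj N K q | q. r * q K \<ge> 1 \<and> valid_prob K q}"
  unfolding gamma_def gamma_obj_def ..

lemma gamma_obj_nonneg: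
  assumes "valid_prob K q"
  shows "0 \<le> gamma_obj N K q"
proof -
  have "K \<noteq> 0" using assms unfolding valid_prob_def by (cases K) auto
  then have "0 \<le> q K" "0 \<le> zz N q K"
    using assms zz_nonneg[OF assms, of K] by (auto simp: valid_prob_def intro: less_imp_le)
  then show ?thesis
    unfolding gamma_obj_def using sum_zz_div_tail_nonneg[OF assms, of "K - 1"] by simp
qed

lemma last_le_zz_last:
  assumes "valid_prob K q" "1 \<le> K" "1 \<le> N"
  shows "q K \<le> zz N q K"
proof -
  let ?F = "sum q {1..K - 1}"
  have "0 \<le> ?F" "?F \<le> 1"
    using valid_prob_prefix_sum_nonneg[OF assms(1), of "K - 1"]
      valid_prob_prefix_sum_less_1[OF assms(1), of "K - 1"] assms(2) by auto
  then have "?F ^ N \<le> ?F ^ 1" using assms(3) by (intro power_decreasing)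
  moreover have "?F = 1 - q K" using valid_prob_tail_sum[OF assms(1), of K] assms(2) by simp
  ultimately show ?thesis unfolding zz_last[OF assms(1)] by simp
qed

lemma sum_zz_div_tail_le:
  assumes "valid_prob K q" "1 \<le> K" "1 \<le> N"
  shows "(\<Sum>i\<in>{1..K - 1}. zz N q i / sum q {i..K}) \<le> 1 / q K"
proof -
  let ?F = "sum q {1..K - 1}"
  have qK: "0 < q K" using assms unfolding valid_prob_def by auto
  have "(\<Sum>i\<in>{1..K - 1}. zz N q i / sum q {i..K}) \<le> (\<Sum>i\<in>{1..K - 1}. zz N q i / q K)"
  proof (rule sum_mono)
    fix i assume i: "i \<in> {1..K - 1}"
    have "q K \<le> sum q {i..K}"
      using i assms(1) by (intro member_le_sum) (auto simp: valid_prob_def intro: less_imp_le)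
    then show "zz N q i / sum q {i..K} \<le> zz N q i / q K"
      using i qK zz_nonneg[OF assms(1), of i N] by (intro divide_left_mono) auto
  qed
  also have "\<dots> = ?F ^ N / q K"
    using sum_zz[of 1 "K - 1" N q] assms(3) by (simp add: sum_divide_distrib[symmetric] power_0_left)
  also have "\<dots> \<le> 1 / q K"
    using qK valid_prob_prefix_sum_nonneg[OF assms(1), of "K - 1"]
      valid_prob_prefix_sum_less_1[OF assms(1), of "K - 1"] assms(2)
    by (intro divide_right_mono power_le_one) auto
  finally show ?thesis .
qed

lemma gamma_obj_le:
  assumes "valid_prob K q" "r * q K \<ge> 1" "1 \<le> K" "1 \<le> N"
  shows "gamma_obj N K q \<le> r"
proof -
  have qK: "0 < q K" using assms unfolding valid_prob_def by auto
  have "gamma_obj N K q \<le> 1 * (1 / q K)"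
    unfolding gamma_obj_def using last_le_zz_last[OF assms(1,3,4)] qK
      sum_zz_div_tail_le[OF assms(1,3,4)] sum_zz_div_tail_nonneg[OF assms(1), of "K - 1" N]
    by (intro mult_mono) auto
  also have "\<dots> \<le> r" using assms(2) qK by (simp add: field_simps)
  finally show ?thesis .
qed

lemma ex_gamma_feasible:
  assumes "1 < r" "1 \<le> K"
  shows "\<exists>q. r * q K \<ge> 1 \<and> valid_prob K q"
proof -
  define a where "a = (1 - 1 / r) / real K"
  define q where "q i = (if i = K then 1 / r + a else a)" for i
  have "0 < a" unfolding a_def using assms by (simp add: field_simps)
  have "(\<Sum>i\<in>{1..K - 1}. q i) = (\<Sum>i\<in>{1..K - 1}. a)"
    unfolding q_def by (intro sum.cong) auto
  then have "sum q {1..K} = (\<Sum>i\<in>{1..K - 1}. a) + q K"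
    using sum_split_at[of 1 "K - 1" K q] assms(2) by simp
  also have "\<dots> = 1" using assms unfolding q_def a_def by (simp add: of_nat_diff field_simps)
  finally have "valid_prob K q"
    using \<open>0 < a\<close> assms unfolding valid_prob_def q_def by (auto intro: add_pos_pos)
  moreover have "r * q K \<ge> 1" using \<open>0 < a\<close> assms unfolding q_def by (simp add: field_simps)
  ultimately show ?thesis by blast
qed

lemma reserve_idx_of_constant_revenue:
  assumes "1 \<le> K" "\<And>k. k \<in> {1..K} \<Longrightarrow> revenue K x p k = c"
  shows "reserve_idx K x p = K"
proof -
  have "{i\<in>{1..K}. \<forall>k\<in>{1..K}. revenue K x p k \<le> revenue K x p i} = {1..K}"
    using assms(2) by auto
  then show ?thesis unfolding reserve_idx_def using assms(1) by (auto intro: Max_eqI)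
qed

definition equal_revenue_values :: "nat \<Rightarrow> (nat \<Rightarrow> real) \<Rightarrow> nat \<Rightarrow> real" where
  "equal_revenue_values K q i = q K / sum q {i..K}"

context
  fixes K :: nat and q :: "nat \<Rightarrow> real"
  assumes q: "valid_prob K q"
begin

lemma revenue_equal_revenue_values:
  "k \<in> {1..K} \<Longrightarrow> revenue K (equal_revenue_values K q) q k = q K"
  unfolding revenue_def equal_revenue_values_def using valid_prob_tail_sum_pos[OF q, of k] by simp

lemma valid_values_equal_revenue_values:
  assumes "r * q K \<ge> 1"
  shows "valid_values r K (equal_revenue_values K q)"
  unfolding valid_values_def
proof (intro conjI ballI impI)
  have qK: "0 < q K" and S1: "sum q {1..K} = 1"
    using q assms unfolding valid_prob_def by (auto simp: mult_le_0_iff)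
  then show "0 < equal_revenue_values K q 1" "equal_revenue_values K q K \<le> r * equal_revenue_values K q 1"
    using assms unfolding equal_revenue_values_def by auto
  fix i j assume "i \<in> {1..K}" "j \<in> {1..K}" "i < j"
  then show "equal_revenue_values K q i < equal_revenue_values K q j"
    unfolding equal_revenue_values_def using qK valid_prob_tail_sum_strict_antimono[OF q, of i j]
      valid_prob_tail_sum_pos[OF q, of j] by (auto intro!: divide_strict_left_mono)
qed

lemma ELR_equal_revenue_values:
  assumes "1 \<le> K" "1 \<le> N"
  shows "ELR N K (equal_revenue_values K q) q = gamma_obj N K q / (1 + gamma_obj N K q)"
proof -
  let ?x = "equal_revenue_values K q"
  define \<Sigma> where "\<Sigma> = (\<Sum>i\<in>{1..K - 1}. zz N q i / sum q {i..K})"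
  have t: "reserve_idx K ?x q = K"
    using revenue_equal_revenue_values by (intro reserve_idx_of_constant_revenue[OF assms(1)])
  have num: "(\<Sum>i\<in>{1..K - 1}. zz N q i * ?x i) = q K * \<Sigma>"
    unfolding \<Sigma>_def equal_revenue_values_def sum_distrib_left by (intro sum.cong) auto
  have "?x K = 1" using q assms unfolding equal_revenue_values_def valid_prob_def by force
  then have den: "(\<Sum>i\<in>{1..K}. zz N q i * ?x i) = q K * \<Sigma> + zz N q K"
    using sum_split_at[of 1 "K - 1" K "\<lambda>i. zz N q i * ?x i"] num assms(1) by simp
  have g: "gamma_obj N K q = q K / zz N q K * \<Sigma>" unfolding gamma_obj_def \<Sigma>_def ..
  show ?thesis
    unfolding ELR_def t atLeastLessThan_1_eq num den g using zz_last_pos[OF q assms]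
    by (simp add: field_simps)
qed

end

definition reserve_obj :: "nat \<Rightarrow> nat \<Rightarrow> (nat \<Rightarrow> real) \<Rightarrow> nat \<Rightarrow> real" where
  "reserve_obj N K p t = sum p {t..K} / (1 - sum p {1..t - 1} ^ N)
     * (\<Sum>i\<in>{1..t - 1}. zz N p i / sum p {i..K})"

lemma gamma_obj_eq_reserve_obj: "valid_prob K q \<Longrightarrow> gamma_obj N K q = reserve_obj N K q K"
  unfolding gamma_obj_def reserve_obj_def zz_last by simp

lemma reserve_obj_nonneg:
  assumes "valid_prob K p" "1 \<le> t" "t \<le> K" "1 \<le> N"
  shows "0 \<le> reserve_obj N K p t"
proof -
  have "sum p {1..t - 1} ^ N < 1"
    using valid_prob_prefix_sum_pow_less_1[OF assms(1), of "t - 1"] assms(2-4) by simp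
  then show ?thesis
    unfolding reserve_obj_def using valid_prob_tail_sum_pos[OF assms(1-3)]
      sum_zz_div_tail_nonneg[OF assms(1), of "t - 1"] assms(3) by simp
qed

lemma reserve_idx_maximizes:
  assumes "1 \<le> K"
  shows "reserve_idx K x p \<in> {1..K}"
    and "k \<in> {1..K} \<Longrightarrow> revenue K x p k \<le> revenue K x p (reserve_idx K x p)"
proof -
  let ?R = "revenue K x p"
  let ?M = "{i\<in>{1..K}. \<forall>k\<in>{1..K}. ?R k \<le> ?R i}"
  have "Max (?R ` {1..K}) \<in> ?R ` {1..K}" using assms by (intro Max_in) auto
  then obtain i where "i \<in> {1..K}" "?R i = Max (?R ` {1..K})" by auto
  then have "i \<in> ?M" by auto
  then have "reserve_idx K x p \<in> ?M"
    unfolding reserve_idx_def by (intro Max_in) auto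
  then show "reserve_idx K x p \<in> {1..K}" "k \<in> {1..K} \<Longrightarrow> ?R k \<le> ?R (reserve_idx K x p)"
    by auto
qed

context
  fixes r :: real and K :: nat and x :: "nat \<Rightarrow> real"
  assumes x: "valid_values r K x"
begin

lemma valid_values_mono: "i \<in> {1..K} \<Longrightarrow> j \<in> {1..K} \<Longrightarrow> i \<le> j \<Longrightarrow> x i \<le> x j"
  using x unfolding valid_values_def by (cases "i = j") (auto intro: less_imp_le)

lemma valid_values_pos: "i \<in> {1..K} \<Longrightarrow> 0 < x i"
  using valid_values_mono[of 1 i] x unfolding valid_values_def by force

lemma reserve_tail_feasible:
  assumes p: "valid_prob K p" and t: "t \<in> {1..K}" and rev: "revenue K x p 1 \<le> revenue K x p t"
  shows "1 \<le> r * sum p {t..K}"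
proof -
  have "x 1 \<le> x t * sum p {t..K}"
    using rev p unfolding revenue_def valid_prob_def by simp
  also have "\<dots> \<le> r * x 1 * sum p {t..K}"
    using valid_values_mono[of t K] t x valid_prob_tail_sum_pos[OF p, of t]
    unfolding valid_values_def by (intro mult_right_mono) auto
  finally show ?thesis using x unfolding valid_values_def by (simp add: algebra_simps)
qed

lemma sum_zz_values_below_reserve_le:
  assumes p: "valid_prob K p" and t: "t \<in> {1..K}"
    and rev: "\<And>k. k \<in> {1..K} \<Longrightarrow> revenue K x p k \<le> revenue K x p t"
  shows "(\<Sum>i\<in>{1..t - 1}. zz N p i * x i)
    \<le> x t * sum p {t..K} * (\<Sum>i\<in>{1..t - 1}. zz N p i / sum p {i..K})"
proof -
  have "(\<Sum>i\<in>{1..t - 1}. zz N p i * x i)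
      \<le> (\<Sum>i\<in>{1..t - 1}. zz N p i * (x t * sum p {t..K} / sum p {i..K}))"
  proof (rule sum_mono)
    fix i assume "i \<in> {1..t - 1}"
    then have i: "i \<in> {1..K}" using t by auto
    have "x i \<le> x t * sum p {t..K} / sum p {i..K}"
      using rev[OF i] valid_prob_tail_sum_pos[OF p, of i] i
      unfolding revenue_def by (simp add: le_divide_eq)
    then show "zz N p i * x i \<le> zz N p i * (x t * sum p {t..K} / sum p {i..K})"
      using zz_nonneg[OF p, of i N] i by (intro mult_left_mono) auto
  qed
  also have "\<dots> = x t * sum p {t..K} * (\<Sum>i\<in>{1..t - 1}. zz N p i / sum p {i..K})"
    unfolding sum_distrib_left by (simp add: field_simps)
  finally show ?thesis .
qed

lemma sum_zz_values_from_reserve_ge: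
  assumes p: "valid_prob K p" and t: "t \<in> {1..K}"
  shows "x t * (1 - sum p {1..t - 1} ^ N) \<le> (\<Sum>i\<in>{t..K}. zz N p i * x i)"
proof -
  have "(\<Sum>i\<in>{t..K}. zz N p i) = 1 - sum p {1..t - 1} ^ N"
    using sum_zz[of t K N p] t p unfolding valid_prob_def by simp
  then have "x t * (1 - sum p {1..t - 1} ^ N) = (\<Sum>i\<in>{t..K}. zz N p i * x t)"
    unfolding sum_distrib_right[symmetric] by simp
  also have "\<dots> \<le> (\<Sum>i\<in>{t..K}. zz N p i * x i)"
    using t zz_nonneg[OF p] valid_values_mono by (intro sum_mono mult_left_mono) auto
  finally show ?thesis .
qed

lemma ELR_le_reserve_obj:
  assumes p: "valid_prob K p" and K: "1 \<le> K" and N: "1 \<le> N"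
  shows "ELR N K x p
    \<le> reserve_obj N K p (reserve_idx K x p) / (1 + reserve_obj N K p (reserve_idx K x p))"
proof -
  define t where "t = reserve_idx K x p"
  define A where "A = (\<Sum>i\<in>{1..t - 1}. zz N p i * x i)"
  define B where "B = (\<Sum>i\<in>{t..K}. zz N p i * x i)"
  define c where "c = x t * (1 - sum p {1..t - 1} ^ N)"
  have t: "t \<in> {1..K}" and rev: "\<And>k. k \<in> {1..K} \<Longrightarrow> revenue K x p k \<le> revenue K x p t"
    using reserve_idx_maximizes[OF K, where x = x and p = p] unfolding t_def by auto
  have FN: "sum p {1..t - 1} ^ N < 1"
    using t by (intro valid_prob_prefix_sum_pow_less_1[OF p _ N]) auto
  then have "0 < c" unfolding c_def using valid_values_pos t by simp
  have "x t * sum p {t..K} * (\<Sum>i\<in>{1..t - 1}. zz N p i / sum p {i..K}) = c * reserve_obj N K p t"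
    using FN unfolding c_def reserve_obj_def by (simp add: field_simps)
  then have "A \<le> c * reserve_obj N K p t"
    using sum_zz_values_below_reserve_le[OF p t rev, of N] unfolding A_def by simp
  moreover have "c \<le> B"
    unfolding B_def c_def by (rule sum_zz_values_from_reserve_ge[OF p t])
  moreover have "0 \<le> A"
    unfolding A_def using t zz_nonneg[OF p] valid_values_pos
    by (intro sum_nonneg mult_nonneg_nonneg) (auto intro: less_imp_le)
  moreover have "(\<Sum>i\<in>{1..K}. zz N p i * x i) = A + B"
    unfolding A_def B_def using sum_split_at[of 1 "t - 1" K "\<lambda>i. zz N p i * x i"] t by auto
  ultimately show ?thesis
    unfolding ELR_def t_def[symmetric] atLeastLessThan_1_eq A_def[symmetric]
    using div_add_le_frac_one_plus[OF _ \<open>0 < c\<close>] reserve_obj_nonneg[OF p _ _ N, of t] t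
    by simp
qed

end

definition pad_prob :: "nat \<Rightarrow> nat \<Rightarrow> (nat \<Rightarrow> real) \<Rightarrow> nat \<Rightarrow> real" where
  "pad_prob K t p i =
     (if i \<le> K + 1 - t then p 1 / real (K + 1 - t) else if i < K then p (i + t - K) else sum p {t..K})"

context
  fixes K t :: nat and p :: "nat \<Rightarrow> real"
  assumes p: "valid_prob K p" and t: "2 \<le> t" "t \<le> K"
begin

lemma pad_prob_prefix_sum_head:
  "i \<le> K + 1 - t \<Longrightarrow> sum (pad_prob K t p) {1..i} = real i * p 1 / real (K + 1 - t)"
proof (induction i)
  case (Suc i)
  then show ?case by (simp add: pad_prob_def field_simps)
qed simp

lemma pad_prob_prefix_sum:
  assumes "K + 1 - t \<le> i" "i < K"
  shows "sum (pad_prob K t p) {1..i} = sum p {1..i + t - K}"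
  using assms(1)
proof (induction i rule: dec_induct)
  case base
  then show ?case using t pad_prob_prefix_sum_head[of "K + 1 - t"] by simp
next
  case (step j)
  have "pad_prob K t p (Suc j) = p (Suc j + t - K)"
    using step.hyps assms(2) unfolding pad_prob_def by auto
  moreover have "Suc j + t - K = Suc (j + t - K)" using step.hyps t by simp
  ultimately show ?case
    using step.IH prefix_sum_pred[of "Suc j" "pad_prob K t p"] prefix_sum_pred[of "Suc (j + t - K)" p]
    by simp
qed

lemma pad_prob_last: "pad_prob K t p K = sum p {t..K}"
  using t unfolding pad_prob_def by simp

lemma pad_prob_prefix_sum_last: "sum (pad_prob K t p) {1..K - 1} = sum p {1..t - 1}"
  using pad_prob_prefix_sum[of "K - 1"] t by simp

lemma valid_prob_pad_prob: "valid_prob K (pad_prob K t p)"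
  unfolding valid_prob_def
proof (intro conjI ballI)
  fix i assume i: "i \<in> {1..K}"
  have "0 < p 1" "0 < sum p {t..K}" "K + 1 - t < i \<Longrightarrow> i + t - K \<in> {1..K}"
    using p t i valid_prob_tail_sum_pos[OF p, of t] unfolding valid_prob_def by auto
  then show "0 < pad_prob K t p i"
    using p t unfolding pad_prob_def valid_prob_def by auto
next
  show "sum (pad_prob K t p) {1..K} = 1"
    using sum_split_at[of 1 "K - 1" K "pad_prob K t p"] t pad_prob_prefix_sum_last pad_prob_last
      valid_prob_tail_sum[OF p, of t] by simp
qed

lemma sum_zz_div_tail_pad_prob_body:
  "(\<Sum>i\<in>{K + 2 - t..K - 1}. zz N (pad_prob K t p) i / sum (pad_prob K t p) {i..K})
     = (\<Sum>j\<in>{2..t - 1}. zz N p j / sum p {j..K})"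
proof -
  let ?q = "pad_prob K t p"
  have "{K + 2 - t..K - 1} = {2 + (K - t)..(t - 1) + (K - t)}" using t by auto
  then have "(\<Sum>i\<in>{K + 2 - t..K - 1}. zz N ?q i / sum ?q {i..K})
      = (\<Sum>j\<in>{2..t - 1}. zz N ?q (j + (K - t)) / sum ?q {j + (K - t)..K})"
    by (simp only: sum.shift_bounds_cl_nat_ivl)
  also have "\<dots> = (\<Sum>j\<in>{2..t - 1}. zz N p j / sum p {j..K})"
  proof (rule sum.cong)
    fix j assume j: "j \<in> {2..t - 1}"
    have F: "sum ?q {1..j + (K - t)} = sum p {1..j}" "sum ?q {1..j + (K - t) - 1} = sum p {1..j - 1}"
      using j t pad_prob_prefix_sum[of "j + (K - t)"] pad_prob_prefix_sum[of "j + (K - t) - 1"] by auto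
    have "sum ?q {j + (K - t)..K} = 1 - sum ?q {1..j + (K - t) - 1}"
      using j t by (intro valid_prob_tail_sum[OF valid_prob_pad_prob]) auto
    also have "\<dots> = sum p {j..K}"
      using valid_prob_tail_sum[OF p, of j] F(2) j t by auto
    finally show "zz N ?q (j + (K - t)) / sum ?q {j + (K - t)..K} = zz N p j / sum p {j..K}"
      unfolding zz_eq F by simp
  qed simp
  finally show ?thesis .
qed

lemma reserve_obj_le_gamma_obj_pad_prob:
  assumes N: "1 \<le> N"
  shows "reserve_obj N K p t \<le> gamma_obj N K (pad_prob K t p)"
proof -
  let ?q = "pad_prob K t p"
  let ?\<Sigma> = "\<lambda>q n. \<Sum>i\<in>{1..n}. zz N q i / sum q {i..K}"
  have "zz N p 1 / sum p {1..K} = p 1 ^ N"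
    using p N unfolding zz_eq valid_prob_def by (simp add: power_0_left)
  then have "?\<Sigma> p (t - 1) = p 1 ^ N + (\<Sum>j\<in>{2..t - 1}. zz N p j / sum p {j..K})"
    using sum.atLeast_Suc_atMost[of 1 "t - 1" "\<lambda>i. zz N p i / sum p {i..K}"] t
    by (simp add: numeral_2_eq_2)
  also have "\<dots> \<le> ?\<Sigma> ?q (K + 1 - t) + (\<Sum>j\<in>{2..t - 1}. zz N p j / sum p {j..K})"
    using prefix_sum_pow_le_sum_zz_div_tail[OF valid_prob_pad_prob, of "K + 1 - t" N]
      pad_prob_prefix_sum_head[of "K + 1 - t"] t N by simp
  also have "\<dots> = ?\<Sigma> ?q (K - 1)"
  proof -
    have "1 \<le> Suc (K + 1 - t)" "K + 1 - t \<le> K - 1" "Suc (K + 1 - t) = K + 2 - t" using t by auto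
    from sum_split_at[OF this(1,2), of "\<lambda>i. zz N ?q i / sum ?q {i..K}"] this(3)
      sum_zz_div_tail_pad_prob_body
    show ?thesis by (simp only:)
  qed
  finally have \<Sigma>_le: "?\<Sigma> p (t - 1) \<le> ?\<Sigma> ?q (K - 1)" .
  have "sum p {1..t - 1} ^ N < 1"
    using t by (intro valid_prob_prefix_sum_pow_less_1[OF p _ N]) auto
  then have "0 \<le> sum p {t..K} / (1 - sum p {1..t - 1} ^ N)"
    using valid_prob_tail_sum_pos[OF p, of t] t by simp
  from mult_left_mono[OF \<Sigma>_le this] show ?thesis
    unfolding gamma_obj_eq_reserve_obj[OF valid_prob_pad_prob] reserve_obj_def
      pad_prob_prefix_sum_last using pad_prob_last by simp
qed

end

lemma ELR_le_gamma_obj: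
  assumes r: "1 < r" and K: "1 \<le> K" and N: "1 \<le> N"
    and p: "valid_prob K p" and x: "valid_values r K x"
  shows "\<exists>q. r * q K \<ge> 1 \<and> valid_prob K q
    \<and> ELR N K x p \<le> gamma_obj N K q / (1 + gamma_obj N K q)"
proof -
  define t where "t = reserve_idx K x p"
  have t: "t \<in> {1..K}" and rev: "revenue K x p 1 \<le> revenue K x p t"
    using reserve_idx_maximizes[OF K, where x = x and p = p] K unfolding t_def by auto
  have ELR_le: "ELR N K x p \<le> reserve_obj N K p t / (1 + reserve_obj N K p t)"
    unfolding t_def by (rule ELR_le_reserve_obj[OF x p K N])
  show ?thesis
  proof (cases "t = 1")
    case True
    obtain q where q: "r * q K \<ge> 1" "valid_prob K q" using ex_gamma_feasible[OF r K] by blast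
    have "ELR N K x p \<le> 0" using ELR_le True by (simp add: reserve_obj_def)
    also have "\<dots> \<le> gamma_obj N K q / (1 + gamma_obj N K q)"
      using gamma_obj_nonneg[OF q(2), of N] by simp
    finally show ?thesis using q by blast
  next
    case False
    then have t2: "2 \<le> t" "t \<le> K" using t by auto
    let ?q = "pad_prob K t p"
    have "r * ?q K \<ge> 1"
      using reserve_tail_feasible[OF x p t rev] pad_prob_last[OF p t2] by simp
    moreover have "ELR N K x p \<le> gamma_obj N K ?q / (1 + gamma_obj N K ?q)"
      using ELR_le frac_one_plus_mono[OF reserve_obj_nonneg[OF p _ _ N]
          reserve_obj_le_gamma_obj_pad_prob[OF p t2 N]] t by auto
    ultimately show ?thesis using valid_prob_pad_prob[OF p t2] by blast
  qed
qed

theorem lemma2: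
  fixes r :: real and K N :: nat
  assumes "r > 1" and "K \<ge> 1" and "N \<ge> 1"
  shows "eta r K N = gamma r K N / (1 + gamma r K N)"
proof -
  let ?G = "{gamma_obj N K q | q. r * q K \<ge> 1 \<and> valid_prob K q}"
  let ?E = "{ELR N K x p | x p. valid_prob K p \<and> valid_values r K x}"
  have "Sup ?E = Sup ?G / (1 + Sup ?G)"
  proof (rule cSup_frac_one_plus)
    show "?G \<noteq> {}" using ex_gamma_feasible[OF assms(1,2)] by blast
    show "bdd_above ?G" using gamma_obj_le assms(2,3) by (fastforce intro: bdd_aboveI)
    show "0 \<le> g" if "g \<in> ?G" for g using that gamma_obj_nonneg by blast
    show "g / (1 + g) \<in> ?E" if g: "g \<in> ?G" for g
    proof -
      obtain q where q: "g = gamma_obj N K q" "r * q K \<ge> 1" "valid_prob K q" using g by blast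
      then show ?thesis
        using ELR_equal_revenue_values[OF q(3) assms(2,3)] valid_values_equal_revenue_values[OF q(3,2)]
        by force
    qed
    show "\<exists>g\<in>?G. e \<le> g / (1 + g)" if "e \<in> ?E" for e
      using that ELR_le_gamma_obj[OF assms(1-3)] by fastforce
  qed
  then show ?thesis unfolding eta_def gamma_eq_Sup_gamma_obj .
qed

end
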